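(* Let $\kappa$ be a regular cardinal and $A$ a $\kappa$-additive complete atomic modal algebra. Then $\tau_A:A\to G(F(A))$, $\tau_A(x)=\{a\in\mathrm{At}(A)\mid a\leq x\}$, is an isomorphism of complete modal algebras; in particular, for every $x\in A$, $$\{a\in\mathrm{At}(A)\mid a\leq\Diamond x\}=\bigcap_{X\subseteq A,\ |X|<\kappa}R(X)^{-1}\big[\{a\in\mathrm{At}(A)\mid a\leq x\}\big].$$
   Context: A modal algebra is a Boolean algebra $A$ with a unary operation $\Diamond$ satisfying $\Diamond 0=0$ and $\Diamond(x\vee y)=\Diamond x\vee\Diamond y$; complete/atomic refer to the Boolean reduct (atomic: every non-zero element is the join of atoms below it); $\mathrm{At}(A)$ is the set of atoms; $\kappa$-additive means $\Diamond\bigvee X=\bigvee_{x\in X}\Diamond x$ for $|X|<\kappa$. A homomorphism of complete modal algebras is a Boolean homomorphism preserving all joins and meets and commuting with $\Diamond$. For $X\subseteq A$, $R(X)$ is the relation on $\mathrm{At}(A)$ with $a\,R(X)\,c\iff a\leq\bigwedge\{\Diamond x\mid x\in X,\ c\leq x\}$ (empty meet $=1$); $F(A)=\langle\mathrm{At}(A),\{R(X)\mid X\subseteq A,|X|<\kappa\}\rangle$. For a relation $R$ and a set $Y$, $R^{-1}[Y]=\{w\mid wRy\text{ for some }y\in Y\}$. For a multi-relational Kripke frame $M=\langle W,S\rangle$, $G(M)$ is the powerset Boolean algebra $\mathcal P(W)$ with $\Diamond_MY=\bigcap_{R\in S}R^{-1}[Y]$. *)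

theory Defs
  imports Main
begin

definition modal_algebra :: "('a::boolean_algebra \<Rightarrow> 'a) \<Rightarrow> bool" where
  "modal_algebra dia \<longleftrightarrow> dia bot = bot \<and> (\<forall>x y. dia (sup x y) = sup (dia x) (dia y))"

definition is_atom :: "'a::boolean_algebra \<Rightarrow> bool" where
  "is_atom a \<longleftrightarrow> a \<noteq> bot \<and> (\<forall>b. b \<le> a \<longrightarrow> b = bot \<or> b = a)"

definition At :: "'a::boolean_algebra set" where
  "At = {a. is_atom a}"

definition atomic_alg :: "'a::complete_boolean_algebra itself \<Rightarrow> bool" where
  "atomic_alg _ \<longleftrightarrow> (\<forall>x::'a. x \<noteq> bot \<longrightarrow> x = Sup {a \<in> At. a \<le> x})"

definition kappa_additive :: "'k rel \<Rightarrow> ('a::complete_boolean_algebra \<Rightarrow> 'a) \<Rightarrow> bool" where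
  "kappa_additive \<kappa> dia \<longleftrightarrow> (\<forall>X::'a set. ordLess2 (card_of X) \<kappa> \<longrightarrow> dia (Sup X) = (SUP x\<in>X. dia x))"

definition regular_cardinal :: "'k rel \<Rightarrow> bool" where
  "regular_cardinal \<kappa> \<longleftrightarrow> Card_order \<kappa> \<and> Cinfinite \<kappa> \<and> regularCard \<kappa>"

definition relR :: "('a::complete_boolean_algebra \<Rightarrow> 'a) \<Rightarrow> 'a set \<Rightarrow> ('a \<times> 'a) set" where
  "relR dia X = {(a, c). a \<in> At \<and> c \<in> At \<and> a \<le> Inf {dia x | x. x \<in> X \<and> c \<le> x}}"

definition frame_rels :: "'k rel \<Rightarrow> ('a::complete_boolean_algebra \<Rightarrow> 'a) \<Rightarrow> ('a \<times> 'a) set set" where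
  "frame_rels \<kappa> dia = {relR dia X | X. ordLess2 (card_of X) \<kappa>}"

definition inv_img :: "('w \<times> 'w) set \<Rightarrow> 'w set \<Rightarrow> 'w set" where
  "inv_img R Y = {w. \<exists>y\<in>Y. (w, y) \<in> R}"

definition dia_G :: "'w set \<Rightarrow> ('w \<times> 'w) set set \<Rightarrow> 'w set \<Rightarrow> 'w set" where
  "dia_G W S Y = {w \<in> W. \<forall>R\<in>S. w \<in> inv_img R Y}"

definition tau :: "'a::complete_boolean_algebra \<Rightarrow> 'a set" where
  "tau x = {a \<in> At. a \<le> x}"

definition cma_iso_onto_powerset ::
  "('a::complete_boolean_algebra \<Rightarrow> 'a) \<Rightarrow> 'w set \<Rightarrow> ('w set \<Rightarrow> 'w set) \<Rightarrow> ('a \<Rightarrow> 'w set) \<Rightarrow> bool" where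
  "cma_iso_onto_powerset dia W diaW f \<longleftrightarrow>
     bij_betw f UNIV (Pow W) \<and>
     f bot = {} \<and> f top = W \<and>
     (\<forall>x y. f (sup x y) = f x \<union> f y) \<and>
     (\<forall>x y. f (inf x y) = f x \<inter> f y) \<and>
     (\<forall>x. f (- x) = W - f x) \<and>
     (\<forall>S. f (Sup S) = \<Union> (f ` S)) \<and>
     (\<forall>S. f (Inf S) = W \<inter> \<Inter> (f ` S)) \<and>
     (\<forall>x. f (dia x) = diaW (f x))"

end

theory Submission
  imports Defs
begin

text \<open>Since A is atomic, \<open>\<tau>\<close> and \<open>Sup\<close> are mutually inverse between A and the sets of atoms,
  and an atom lies below a join exactly when it lies below one of the joinands; this makes \<open>\<tau>\<close>
  a complete Boolean isomorphism. For the modal part, R({x}) already shows that atoms related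
  to an atom below x lie below \<open>\<Diamond>x\<close>. Conversely, if an atom a below \<open>\<Diamond>x\<close> were not R(X)-related
  to any atom below x, the elements y of X with \<open>a \<le> \<Diamond>y\<close> false would cover all atoms below x,
  hence x itself; \<open>\<kappa>\<close>-additivity then puts a below the join of their diamonds, so below one of
  them, a contradiction.\<close>

lemma atom_le_Sup_iff:
  fixes a :: "'a::complete_boolean_algebra"
  assumes "is_atom a"
  shows "a \<le> Sup S \<longleftrightarrow> (\<exists>s\<in>S. a \<le> s)"
proof
  assume le: "a \<le> Sup S"
  show "\<exists>s\<in>S. a \<le> s"
  proof (rule ccontr)
    assume none: "\<not> (\<exists>s\<in>S. a \<le> s)"
    have "inf a s = bot" if "s \<in> S" for s
    proof -
      have "inf a s = bot \<or> inf a s = a" using assms unfolding is_atom_def by simp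
      moreover have "inf a s \<noteq> a" using none that by (metis inf.absorb_iff1)
      ultimately show ?thesis by blast
    qed
    then have "inf a (Sup S) = bot" by (simp add: inf_Sup)
    then have "a = bot" using le by (simp add: inf.absorb1)
    then show False using assms unfolding is_atom_def by blast
  qed
qed (auto intro: Sup_upper2)

lemma atom_le_sup_iff:
  fixes a :: "'a::complete_boolean_algebra"
  assumes "is_atom a"
  shows "a \<le> sup x y \<longleftrightarrow> a \<le> x \<or> a \<le> y"
  using atom_le_Sup_iff[OF assms, of "{x, y}"] by simp

lemma atom_le_compl_iff:
  fixes a :: "'a::complete_boolean_algebra"
  assumes "is_atom a"
  shows "a \<le> - x \<longleftrightarrow> \<not> a \<le> x"
proof -
  have "a \<noteq> bot" using assms unfolding is_atom_def by blast
  moreover have "inf a x = bot \<or> inf a x = a" using assms unfolding is_atom_def by simp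
  ultimately show ?thesis by (metis inf.absorb_iff1 inf_shunt)
qed

lemma tau_subset_At: "tau x \<subseteq> At"
  unfolding tau_def by auto

lemma Sup_tau:
  fixes x :: "'a::complete_boolean_algebra"
  assumes "atomic_alg TYPE('a)"
  shows "Sup (tau x) = x"
proof (cases "x = bot")
  case True
  then have "tau x = {}" unfolding tau_def At_def is_atom_def by (auto simp: bot_unique)
  then show ?thesis using True by simp
next
  case False
  then show ?thesis using assms unfolding atomic_alg_def tau_def by metis
qed

lemma tau_Sup_of_atoms:
  fixes S :: "'a::complete_boolean_algebra set"
  assumes "S \<subseteq> At"
  shows "tau (Sup S) = S"
proof
  show "tau (Sup S) \<subseteq> S"
  proof
    fix a assume "a \<in> tau (Sup S)"
    then have a: "is_atom a" "a \<le> Sup S" unfolding tau_def At_def by auto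
    then obtain s where s: "s \<in> S" "a \<le> s" using atom_le_Sup_iff by blast
    then have "is_atom s" using assms unfolding At_def by auto
    with s a(1) have "a = s" unfolding is_atom_def by blast
    with s show "a \<in> S" by simp
  qed
  show "S \<subseteq> tau (Sup S)" using assms unfolding tau_def by (auto intro: Sup_upper)
qed

lemma bij_betw_tau:
  assumes "atomic_alg TYPE('a::complete_boolean_algebra)"
  shows "bij_betw (tau :: 'a \<Rightarrow> 'a set) UNIV (Pow At)"
  by (rule bij_betw_byWitness[where f' = Sup])
    (use Sup_tau[OF assms] tau_Sup_of_atoms tau_subset_At in blast)+

lemma tau_bot: "tau bot = {}"
  unfolding tau_def At_def is_atom_def by (auto simp: bot_unique)

lemma tau_top: "tau top = At"
  unfolding tau_def by auto

lemma tau_sup: "tau (sup x y) = tau x \<union> tau y"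
  unfolding tau_def At_def by (auto simp: atom_le_sup_iff)

lemma tau_inf: "tau (inf x y) = tau x \<inter> tau y"
  unfolding tau_def by auto

lemma tau_compl: "tau (- x) = At - tau x"
  unfolding tau_def At_def by (auto simp: atom_le_compl_iff)

lemma tau_Sup: "tau (Sup S) = \<Union> (tau ` S)"
  unfolding tau_def At_def by (auto simp: atom_le_Sup_iff)

lemma tau_Inf: "tau (Inf S) = At \<inter> \<Inter> (tau ` S)"
  unfolding tau_def by (auto intro: Inf_greatest order_trans[OF _ Inf_lower])

lemma modal_algebra_mono:
  assumes "modal_algebra dia" "x \<le> y"
  shows "dia x \<le> dia y"
  using assms unfolding modal_algebra_def by (metis sup.absorb2 sup.cobounded1)

lemma atom_le_dia_imp_inv_img_relR:
  fixes dia :: "'a::complete_boolean_algebra \<Rightarrow> 'a"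
  assumes "modal_algebra dia" "atomic_alg TYPE('a)" "kappa_additive \<kappa> dia"
    and a: "is_atom a" "a \<le> dia x"
    and X: "ordLess2 (card_of X) \<kappa>"
  shows "a \<in> inv_img (relR dia X) (tau x)"
proof (rule ccontr)
  assume unrelated: "a \<notin> inv_img (relR dia X) (tau x)"
  define Y where "Y = {y \<in> X. \<not> a \<le> dia y}"
  have covers: "\<exists>y\<in>Y. c \<le> y" if "c \<in> tau x" for c
  proof -
    have "c \<in> At" using that tau_subset_At by blast
    moreover have "a \<in> At" using a(1) unfolding At_def by simp
    ultimately have "\<not> a \<le> Inf {dia y | y. y \<in> X \<and> c \<le> y}"
      using unrelated that unfolding inv_img_def relR_def by blast
    then obtain y where "y \<in> X" "c \<le> y" "\<not> a \<le> dia y" by (auto intro: Inf_greatest)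
    then show ?thesis unfolding Y_def by blast
  qed
  have "x \<le> Sup Y"
    using Sup_tau[OF assms(2), of x] covers by (metis Sup_least Sup_upper2)
  then have "a \<le> dia (Sup Y)" using a(2) modal_algebra_mono[OF assms(1)] by (blast intro: order_trans)
  moreover have "ordLess2 (card_of Y) \<kappa>"
    by (rule ordLeq_ordLess_trans[OF card_of_mono1 X]) (auto simp: Y_def)
  then have "dia (Sup Y) = (SUP y\<in>Y. dia y)" using assms(3) unfolding kappa_additive_def by blast
  ultimately obtain y where "y \<in> Y" "a \<le> dia y" using atom_le_Sup_iff[OF a(1)] by auto
  then show False unfolding Y_def by blast
qed

lemma inv_img_relR_singleton_imp_le_dia:
  assumes "a \<in> inv_img (relR dia {x}) (tau x)"
  shows "a \<le> dia x"
proof -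
  obtain c where "c \<le> x" "a \<le> Inf {dia y | y. y \<in> {x} \<and> c \<le> y}"
    using assms unfolding inv_img_def relR_def tau_def by blast
  moreover have "{dia y | y. y \<in> {x} \<and> c \<le> y} = {dia x}" using \<open>c \<le> x\<close> by auto
  ultimately show ?thesis by simp
qed

lemma card_of_singleton_ordLess_Cinfinite:
  assumes "Cinfinite \<kappa>"
  shows "ordLess2 (card_of {x}) \<kappa>"
  by (rule Cfinite_ordLess_Cinfinite[OF _ assms])
    (simp add: cfinite_def Field_card_of card_of_Card_order card_of_card_order_on)

lemma tau_dia:
  fixes dia :: "'a::complete_boolean_algebra \<Rightarrow> 'a"
  assumes "Cinfinite \<kappa>" "modal_algebra dia" "atomic_alg TYPE('a)" "kappa_additive \<kappa> dia"
  shows "tau (dia x) = {a \<in> At. \<forall>X::'a set. ordLess2 (card_of X) \<kappa> \<longrightarrow> a \<in> inv_img (relR dia X) (tau x)}"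
proof (intro set_eqI iffI)
  fix a assume "a \<in> tau (dia x)"
  then have "is_atom a" "a \<le> dia x" "a \<in> At" unfolding tau_def At_def by auto
  then show "a \<in> {a \<in> At. \<forall>X::'a set. ordLess2 (card_of X) \<kappa> \<longrightarrow> a \<in> inv_img (relR dia X) (tau x)}"
    using atom_le_dia_imp_inv_img_relR[OF assms(2-4)] by blast
next
  fix a assume "a \<in> {a \<in> At. \<forall>X::'a set. ordLess2 (card_of X) \<kappa> \<longrightarrow> a \<in> inv_img (relR dia X) (tau x)}"
  then have "a \<in> At" "a \<in> inv_img (relR dia {x}) (tau x)"
    using card_of_singleton_ordLess_Cinfinite[OF assms(1), of x] by auto
  then show "a \<in> tau (dia x)" unfolding tau_def[of "dia x"]
    using inv_img_relR_singleton_imp_le_dia by blast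
qed

theorem theorem9p2:
  fixes \<kappa> :: "'k rel" and dia :: "'a::complete_boolean_algebra \<Rightarrow> 'a"
  assumes "regular_cardinal \<kappa>"
    and "modal_algebra dia"
    and "atomic_alg TYPE('a)"
    and "kappa_additive \<kappa> dia"
  shows "cma_iso_onto_powerset dia (At::'a set) (dia_G At (frame_rels \<kappa> dia)) tau
    \<and> (\<forall>x::'a. {a \<in> At. a \<le> dia x} =
         {a \<in> At. \<forall>X::'a set. ordLess2 (card_of X) \<kappa> \<longrightarrow> a \<in> inv_img (relR dia X) {c \<in> At. c \<le> x}})"
proof -
  have "Cinfinite \<kappa>" using assms(1) unfolding regular_cardinal_def by blast
  note tau_dia = tau_dia[OF this assms(2-4)]
  have "tau (dia x) = dia_G At (frame_rels \<kappa> dia) (tau x)" for x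
    unfolding tau_dia dia_G_def frame_rels_def by blast
  then have "cma_iso_onto_powerset dia At (dia_G At (frame_rels \<kappa> dia)) tau"
    unfolding cma_iso_onto_powerset_def
    using bij_betw_tau[OF assms(3)] tau_bot tau_top tau_sup tau_inf tau_compl tau_Sup tau_Inf
    by blast
  moreover have "{a \<in> At. a \<le> dia x} =
      {a \<in> At. \<forall>X::'a set. ordLess2 (card_of X) \<kappa> \<longrightarrow> a \<in> inv_img (relR dia X) {c \<in> At. c \<le> x}}"
    for x
    using tau_dia[of x] unfolding tau_def .
  ultimately show ?thesis by blast
qed

end
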